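(* Let $\phi:R\to S$ be a cyclically pure ring map. If $S$ has strong avoidance, then $R$ has strong avoidance. In particular this holds whenever $\phi$ is a pure morphism.
   Context: All rings are commutative with $1\neq 0$. A ring map $\phi:R\to S$ is cyclically pure if for every ideal $I$ of $R$ the induced map $R/I\to S/IS$ is injective; it is pure if $M\to M\otimes_R S$, $x\mapsto x\otimes1$, is injective for every $R$-module $M$. A ring map $\psi:A\to B$ has avoidance if whenever $I,I_1,\ldots,I_n$ are ideals of $A$ with $I\subseteq\bigcup_{k=1}^n I_k$, then $IB\subseteq I_kB$ for some $k$. A ring $B$ has strong avoidance if every ring map $A\to B$ has avoidance. *)

theory Defs
  imports "HOL-Algebra.QuotRing"
begin

definition nz_cring :: "('a, 'm) ring_scheme \<Rightarrow> bool" where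
  "nz_cring R \<longleftrightarrow> cring R \<and> \<one>\<^bsub>R\<^esub> \<noteq> \<zero>\<^bsub>R\<^esub>"

definition ext_ideal :: "('a, 'm) ring_scheme \<Rightarrow> ('b, 'n) ring_scheme \<Rightarrow> ('a \<Rightarrow> 'b) \<Rightarrow> 'a set \<Rightarrow> 'b set" where
  "ext_ideal R S phi I = Idl\<^bsub>S\<^esub> (phi ` I)"

text \<open>Cyclic purity: for every ideal I of R the induced map R/I \<rightarrow> S/IS,
  I +> x \<mapsto> IS +> phi x, is injective.\<close>
definition cyclically_pure :: "('a, 'm) ring_scheme \<Rightarrow> ('b, 'n) ring_scheme \<Rightarrow> ('a \<Rightarrow> 'b) \<Rightarrow> bool" where
  "cyclically_pure R S phi \<longleftrightarrow>
     phi \<in> ring_hom R S \<and>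
     (\<forall>I. ideal I R \<longrightarrow>
        (\<forall>x \<in> carrier R. \<forall>y \<in> carrier R.
           ext_ideal R S phi I +>\<^bsub>S\<^esub> phi x = ext_ideal R S phi I +>\<^bsub>S\<^esub> phi y
           \<longrightarrow> I +>\<^bsub>R\<^esub> x = I +>\<^bsub>R\<^esub> y))"

definition has_avoidance :: "('a, 'm) ring_scheme \<Rightarrow> ('b, 'n) ring_scheme \<Rightarrow> ('a \<Rightarrow> 'b) \<Rightarrow> bool" where
  "has_avoidance A B psi \<longleftrightarrow>
     (\<forall>I (Is :: nat \<Rightarrow> 'a set) (n :: nat).
        ideal I A \<longrightarrow> (\<forall>k \<in> {1..n}. ideal (Is k) A) \<longrightarrow>
        I \<subseteq> (\<Union>k \<in> {1..n}. Is k) \<longrightarrow>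
        (\<exists>k \<in> {1..n}. ext_ideal A B psi I \<subseteq> ext_ideal A B psi (Is k)))"

text \<open>Leaving 'c free in a theorem quantifies over all source types.\<close>
definition strong_avoidance :: "'c itself \<Rightarrow> ('b, 'n) ring_scheme \<Rightarrow> bool" where
  "strong_avoidance (_ :: 'c itself) B \<longleftrightarrow>
     (\<forall>(A :: 'c ring) psi. nz_cring A \<longrightarrow> psi \<in> ring_hom A B \<longrightarrow> has_avoidance A B psi)"

end

theory Submission
  imports Defs
begin

text \<open>Cyclic purity says exactly that every ideal \<open>J\<close> of \<open>R\<close> is contracted from its extension:
  \<open>\<phi>\<^sup>-\<^sup>1(JS) = J\<close>. Given a map \<open>\<psi> : A \<rightarrow> R\<close> and a covering \<open>I \<subseteq> I\<^sub>1 \<union> \<dots> \<union> I\<^sub>n\<close> of ideals of \<open>A\<close>,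
  avoidance for \<open>\<phi> \<circ> \<psi>\<close> yields \<open>IS \<subseteq> I\<^sub>kS\<close> for some \<open>k\<close>. As \<open>I\<^sub>kS\<close> is the extension of
  \<open>J = I\<^sub>kR\<close> along \<open>\<phi>\<close>, contracting back to \<open>R\<close> gives \<open>IR \<subseteq> J\<close>.\<close>

lemma ring_hom_image_subset_carrier:
  assumes "phi \<in> ring_hom R S" "X \<subseteq> carrier R"
  shows "phi ` X \<subseteq> carrier S"
  using assms(2) ring_hom_closed[OF assms(1)] by blast

lemma cyclically_pure_ring_hom: "cyclically_pure R S phi \<Longrightarrow> phi \<in> ring_hom R S"
  unfolding cyclically_pure_def by blast

lemma ext_ideal_ideal:
  assumes "ring S" "phi \<in> ring_hom R S" "X \<subseteq> carrier R"
  shows "ideal (ext_ideal R S phi X) S"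
  unfolding ext_ideal_def
  using ring.genideal_ideal[OF assms(1) ring_hom_image_subset_carrier[OF assms(2,3)]] .

lemma image_subset_ext_ideal:
  assumes "ring S" "phi \<in> ring_hom R S" "X \<subseteq> carrier R"
  shows "phi ` X \<subseteq> ext_ideal R S phi X"
  unfolding ext_ideal_def
  using ring.genideal_self[OF assms(1) ring_hom_image_subset_carrier[OF assms(2,3)]] .

lemma ext_ideal_comp_subset:
  assumes "ring R" "ring S" "phi \<in> ring_hom R S" "psi \<in> ring_hom A R" "X \<subseteq> carrier A"
  shows "ext_ideal A S (phi \<circ> psi) X \<subseteq> ext_ideal R S phi (ext_ideal A R psi X)"
proof -
  let ?J = "ext_ideal A R psi X"
  have J_carrier: "?J \<subseteq> carrier R"
    using additive_subgroup.a_subset[OF ideal.axioms(1)[OF ext_ideal_ideal[OF assms(1,4,5)]]] .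
  have "(phi \<circ> psi) ` X = phi ` psi ` X"
    by (simp add: image_comp)
  also have "\<dots> \<subseteq> phi ` ?J"
    using image_subset_ext_ideal[OF assms(1,4,5)] by blast
  also have "\<dots> \<subseteq> ext_ideal R S phi ?J"
    using image_subset_ext_ideal[OF assms(2,3) J_carrier] .
  finally show ?thesis
    using ring.genideal_minimal[OF assms(2) ext_ideal_ideal[OF assms(2,3) J_carrier]]
    unfolding ext_ideal_def[of A S] by blast
qed

lemma cyclically_pure_contraction:
  assumes "ring R" "ring S" "cyclically_pure R S phi"
    and J: "ideal J R" and x: "x \<in> carrier R" and phi_x: "phi x \<in> ext_ideal R S phi J"
  shows "x \<in> J"
proof -
  interpret R: ring R by fact
  interpret S: ring S by fact
  have phi: "phi \<in> ring_hom R S"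
    using cyclically_pure_ring_hom[OF assms(3)] .
  let ?E = "ext_ideal R S phi J"
  have E: "ideal ?E S"
    using ext_ideal_ideal[OF assms(2) phi additive_subgroup.a_subset[OF ideal.axioms(1)[OF J]]] .
  have "?E +>\<^bsub>S\<^esub> phi x = ?E +>\<^bsub>S\<^esub> phi \<zero>\<^bsub>R\<^esub>"
    using S.a_rcos_zero[OF E phi_x] S.a_rcos_zero[OF E additive_subgroup.zero_closed[OF ideal.axioms(1)[OF E]]]
      ring_hom_zero[OF phi R.ring_axioms S.ring_axioms] by simp
  then have "J +>\<^bsub>R\<^esub> x = J +>\<^bsub>R\<^esub> \<zero>\<^bsub>R\<^esub>"
    using assms(3) J x unfolding cyclically_pure_def by blast
  also have "\<dots> = J"
    using R.a_rcos_zero[OF J additive_subgroup.zero_closed[OF ideal.axioms(1)[OF J]]] .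
  finally show ?thesis
    using ideal.rcos_const_imp_mem[OF J x] by blast
qed

lemma cyclically_pure_reflects_ext_ideal_subset:
  assumes "ring R" "ring S" "cyclically_pure R S phi"
    and J: "ideal J R" and X: "X \<subseteq> carrier R"
    and sub: "ext_ideal R S phi X \<subseteq> ext_ideal R S phi J"
  shows "Idl\<^bsub>R\<^esub> X \<subseteq> J"
proof -
  have "phi ` X \<subseteq> ext_ideal R S phi J"
    using image_subset_ext_ideal[OF assms(2) cyclically_pure_ring_hom[OF assms(3)] X] sub
    by blast
  then have "X \<subseteq> J"
    using cyclically_pure_contraction[OF assms(1-3) J] X by blast
  then show ?thesis
    using ring.genideal_minimal[OF assms(1) J] by blast
qed

lemma has_avoidance_of_comp:
  assumes "ring A" "ring R" "ring S" "cyclically_pure R S phi" "psi \<in> ring_hom A R"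
    and avoid: "has_avoidance A S (phi \<circ> psi)"
  shows "has_avoidance A R psi"
  unfolding has_avoidance_def
proof (intro allI impI)
  fix I Is and n :: nat
  assume I: "ideal I A" and Is: "\<forall>k\<in>{1..n}. ideal (Is k) A"
    and cover: "I \<subseteq> (\<Union>k\<in>{1..n}. Is k)"
  have phi: "phi \<in> ring_hom R S"
    using cyclically_pure_ring_hom[OF assms(4)] .
  obtain k where k: "k \<in> {1..n}"
    and sub: "ext_ideal A S (phi \<circ> psi) I \<subseteq> ext_ideal A S (phi \<circ> psi) (Is k)"
    using avoid I Is cover unfolding has_avoidance_def by blast
  have Is_k: "Is k \<subseteq> carrier A"
    using Is k additive_subgroup.a_subset[OF ideal.axioms(1)] by blast
  define J where "J = ext_ideal A R psi (Is k)"
  have J: "ideal J R"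
    unfolding J_def using ext_ideal_ideal[OF assms(2,5) Is_k] .
  have psi_I: "psi ` I \<subseteq> carrier R"
    using ring_hom_image_subset_carrier[OF assms(5) additive_subgroup.a_subset[OF ideal.axioms(1)[OF I]]] .
  have "ext_ideal R S phi (psi ` I) = ext_ideal A S (phi \<circ> psi) I"
    unfolding ext_ideal_def by (simp add: image_comp)
  also have "\<dots> \<subseteq> ext_ideal R S phi J"
    using sub ext_ideal_comp_subset[OF assms(2,3) phi assms(5) Is_k] unfolding J_def by blast
  finally have "ext_ideal A R psi I \<subseteq> J"
    using cyclically_pure_reflects_ext_ideal_subset[OF assms(2-4) J psi_I]
    unfolding ext_ideal_def[of A R] by blast
  with k show "\<exists>k\<in>{1..n}. ext_ideal A R psi I \<subseteq> ext_ideal A R psi (Is k)"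
    unfolding J_def by blast
qed

theorem lemma4p6:
  fixes R :: "'a ring" and S :: "'b ring" and phi :: "'a \<Rightarrow> 'b"
  assumes "nz_cring R" and "nz_cring S"
    and "cyclically_pure R S phi"
    and "strong_avoidance TYPE('c) S"
  shows "strong_avoidance TYPE('c) R"
  unfolding strong_avoidance_def
proof (intro allI impI)
  fix A :: "'c ring" and psi
  assume A: "nz_cring A" and psi: "psi \<in> ring_hom A R"
  have rings: "ring A" "ring R" "ring S"
    using A assms(1,2) by (simp_all add: nz_cring_def cring.axioms(1))
  have "phi \<circ> psi \<in> ring_hom A S"
    using ring_hom_trans[OF psi cyclically_pure_ring_hom[OF assms(3)]] .
  then have "has_avoidance A S (phi \<circ> psi)"
    using assms(4) A unfolding strong_avoidance_def by blast
  then show "has_avoidance A R psi"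
    by (rule has_avoidance_of_comp[OF rings assms(3) psi])
qed

end
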